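(* Let $A$ be a commutative ring, $r\ge1$, $B=A[x_1,\dots,x_r]$, let $k\ge1$ and $\alpha\in\mathbb{N}^r\setminus\{0\}$ with $\gcd(\alpha)$ invertible in $A$, and let $n\ge k|\alpha|$. If $a\in A$ satisfies $a\,\gamma^k(x^\alpha)\times\gamma^{n-k}(1)\in\Gamma^n_A(B)_{<k\alpha}$, then $a=0$.
   Context: $\Gamma^n_A(B)$ is identified with $\mathrm{TS}^n_A(B)=(B^{\otimes_A n})^{\mathfrak S_n}$ (componentwise multiplication). For a monomial $f$ and $0\le k\le n$, $\gamma^k(f)\times\gamma^{n-k}(1)=\sum_{S\subseteq\{1..n\},|S|=k}\bigotimes_{j}f_j$ with $f_j=f$ for $j\in S$ and $f_j=1$ otherwise. $B^{\otimes n}$ is $\mathbb{N}^r$-graded by giving $x^{\beta_1}\otimes\dots\otimes x^{\beta_n}$ multidegree $\beta_1+\dots+\beta_n$. $\beta<\gamma$ means $\beta\le\gamma$ componentwise and $\beta\ne\gamma$; $\Gamma^n_A(B)_{<\gamma}$ is the $A$-subalgebra generated by homogeneous elements of multidegree $<\gamma$. $|\alpha|=\sum\alpha_i$. *)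

theory Defs
  imports Main "HOL-Library.Poly_Mapping" "HOL-Combinatorics.Permutations"
begin

(* Model of B^{\<otimes>_A n} for B = A[x_1..x_r]: the polynomial ring over A in the
variables x_{j,i} (j < n the tensor factor, i < r the variable), i.e. elements of
type ((nat \<times> nat) \<Rightarrow>\<^sub>0 nat) \<Rightarrow>\<^sub>0 'a whose monomials only involve
variables (j,i) with j < n, i < r.  Componentwise multiplication of tensors is
polynomial multiplication (convolution).  Indices are 0-based.*)

type_synonym 'a tens = "((nat \<times> nat) \<Rightarrow>\<^sub>0 nat) \<Rightarrow>\<^sub>0 'a"

definition tensor_space :: "nat \<Rightarrow> nat \<Rightarrow> ('a::comm_ring_1) tens set" where
  "tensor_space r n = {p :: 'a tens. \<forall>m \<in> Poly_Mapping.keys p. Poly_Mapping.keys m \<subseteq> ({..<n} \<times> {..<r})}"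

definition symmetric_tensor :: "nat \<Rightarrow> ('a::comm_ring_1) tens \<Rightarrow> bool" where
  "symmetric_tensor n p \<longleftrightarrow>
     (\<forall>\<sigma> (m::(nat \<times> nat) \<Rightarrow>\<^sub>0 nat) (m'::(nat \<times> nat) \<Rightarrow>\<^sub>0 nat). \<sigma> permutes {..<n} \<and> (\<forall>j i. Poly_Mapping.lookup m' (j,i) = Poly_Mapping.lookup m (\<sigma> j, i))
        \<longrightarrow> Poly_Mapping.lookup p m' = Poly_Mapping.lookup p m)"

(* TS^n_A(B) = (B^{\<otimes> n})^{S_n}, identified with \<Gamma>^n_A(B).*)
definition TS :: "nat \<Rightarrow> nat \<Rightarrow> ('a::comm_ring_1) tens set" where
  "TS r n = {p \<in> tensor_space r n. symmetric_tensor n p}"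

definition mdeg :: "nat \<Rightarrow> ((nat \<times> nat) \<Rightarrow>\<^sub>0 nat) \<Rightarrow> nat \<Rightarrow> nat" where
  "mdeg n m = (\<lambda>i. \<Sum>j<n. Poly_Mapping.lookup m (j,i))"

definition homogeneous :: "nat \<Rightarrow> ('a::comm_ring_1) tens \<Rightarrow> (nat \<Rightarrow> nat) \<Rightarrow> bool" where
  "homogeneous n p \<delta> \<longleftrightarrow> (\<forall>m \<in> Poly_Mapping.keys p. mdeg n m = \<delta>)"

definition mdeg_less :: "nat \<Rightarrow> (nat \<Rightarrow> nat) \<Rightarrow> (nat \<Rightarrow> nat) \<Rightarrow> bool" where
  "mdeg_less r \<delta> \<gamma> \<longleftrightarrow> (\<forall>i<r. \<delta> i \<le> \<gamma> i) \<and> (\<exists>i<r. \<delta> i \<noteq> \<gamma> i)"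

definition const_tens :: "'a::comm_ring_1 \<Rightarrow> 'a tens" where
  "const_tens c = Poly_Mapping.single 0 c"

inductive_set Gamma_less :: "nat \<Rightarrow> nat \<Rightarrow> (nat \<Rightarrow> nat) \<Rightarrow> ('a::comm_ring_1) tens set"
  for r n \<gamma> where
  gen: "\<lbrakk>p \<in> TS r n; homogeneous n p \<delta>; mdeg_less r \<delta> \<gamma>\<rbrakk> \<Longrightarrow> p \<in> Gamma_less r n \<gamma>"
| const: "const_tens c \<in> Gamma_less r n \<gamma>"
| add: "\<lbrakk>p \<in> Gamma_less r n \<gamma>; q \<in> Gamma_less r n \<gamma>\<rbrakk> \<Longrightarrow> p + q \<in> Gamma_less r n \<gamma>"
| mult: "\<lbrakk>p \<in> Gamma_less r n \<gamma>; q \<in> Gamma_less r n \<gamma>\<rbrakk> \<Longrightarrow> p * q \<in> Gamma_less r n \<gamma>"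

(* Exponent of the monomial whose j-th tensor factor is x^\<alpha> for j \<in> S and 1 otherwise.*)
definition mon_on :: "nat \<Rightarrow> nat set \<Rightarrow> (nat \<Rightarrow> nat) \<Rightarrow> ((nat \<times> nat) \<Rightarrow>\<^sub>0 nat)" where
  "mon_on r S \<alpha> = (\<Sum>j\<in>S. \<Sum>i<r. Poly_Mapping.single (j,i) (\<alpha> i))"

(* \<gamma>^k(x^\<alpha>) \<times> \<gamma>^{n-k}(1) = sum over k-subsets S of {1..n}.*)
definition gamma_prod :: "nat \<Rightarrow> nat \<Rightarrow> nat \<Rightarrow> (nat \<Rightarrow> nat) \<Rightarrow> ('a::comm_ring_1) tens" where
  "gamma_prod r n k \<alpha> =
     (\<Sum>S \<in> {S. S \<subseteq> {..<n} \<and> card S = k}. Poly_Mapping.single (mon_on r S \<alpha>) 1)"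

end

theory Submission
  imports Defs "HOL-Library.Disjoint_Sets"
begin

text \<open>Fix a multidegree \<open>D \<noteq> 0\<close> with \<open>|D| \<le> n\<close> and a variable index \<open>i\<close>. Let \<open>\<phi>\<close> be the
  linear form on \<open>B\<^sup>\<otimes>\<^sup>n\<close> sending a monomial of multidegree \<open>D\<close> whose nontrivial tensor factors
  are exactly the first \<open>L\<close> ones to \<open>(-1)^(L+1)\<close> times the exponent of \<open>x\<^sub>i\<close> in its first
  factor, and every other monomial to \<open>0\<close>. On symmetric tensors \<open>\<phi>(pq) = p(0) \<phi>(q) + q(0) \<phi>(p)\<close>:
  the cross terms cancel in pairs under an involution that splits a shared factor or merges two
  adjacent ones, changing \<open>L\<close> by one, while symmetry keeps the coefficients equal; the bound
  \<open>|D| \<le> n\<close> leaves room for the extra factor. Hence \<open>\<phi>\<close> vanishes on the subalgebra generated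
  in multidegrees \<open>< k\<alpha>\<close>. On \<open>\<gamma>\<^sup>k(x\<^sup>\<alpha>) \<times> \<gamma>\<^sup>n\<^sup>-\<^sup>k(1)\<close> only \<open>x\<^sup>\<alpha> \<otimes> \<dots> \<otimes> x\<^sup>\<alpha> \<otimes> 1 \<otimes> \<dots> \<otimes> 1\<close>
  contributes, with value \<open>\<plusminus>\<alpha>\<^sub>i\<close>. So \<open>a \<alpha>\<^sub>i = 0\<close> for every \<open>i\<close>, hence \<open>a gcd(\<alpha>) = 0\<close> and
  \<open>a = 0\<close>.\<close>

section \<open>Permuting tensor factors\<close>

type_synonym monom = "(nat \<times> nat) \<Rightarrow>\<^sub>0 nat"

definition perm_factors :: "(nat \<Rightarrow> nat) \<Rightarrow> monom \<Rightarrow> monom" where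
  "perm_factors \<sigma> = Poly_Mapping.map_key (\<lambda>(j, i). (\<sigma> j, i))"

lemma inj_map_factor_index: "inj \<sigma> \<Longrightarrow> inj (\<lambda>(j::nat, i::nat). (\<sigma> j, i))"
  by (auto simp: inj_def)

lemma lookup_perm_factors:
  "inj \<sigma> \<Longrightarrow> Poly_Mapping.lookup (perm_factors \<sigma> m) (j, i) = Poly_Mapping.lookup m (\<sigma> j, i)"
  by (simp add: perm_factors_def Poly_Mapping.map_key.rep_eq inj_map_factor_index)

lemma perm_factors_add:
  "inj \<sigma> \<Longrightarrow> perm_factors \<sigma> (a + b) = perm_factors \<sigma> a + perm_factors \<sigma> b"
  by (simp add: perm_factors_def map_key_plus inj_map_factor_index)

lemma perm_factors_zero: "inj \<sigma> \<Longrightarrow> perm_factors \<sigma> 0 = 0"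
  by (simp add: perm_factors_def inj_map_factor_index)

lemma perm_factors_inverse:
  assumes "\<And>j. \<sigma> (\<tau> j) = j" "\<And>j. \<tau> (\<sigma> j) = j"
  shows "perm_factors \<tau> (perm_factors \<sigma> m) = m"
proof -
  have "inj \<sigma>" "inj \<tau>" by (metis assms injI)+
  then show ?thesis
    by (intro poly_mapping_eqI) (auto simp: lookup_perm_factors assms)
qed

lemma perm_factors_permutes_inverse:
  "\<sigma> permutes S \<Longrightarrow> perm_factors (inv \<sigma>) (perm_factors \<sigma> m) = m"
  "\<sigma> permutes S \<Longrightarrow> perm_factors \<sigma> (perm_factors (inv \<sigma>) m) = m"
  by (auto intro!: perm_factors_inverse dest: permutes_inverses)

lemma bij_perm_factors: "\<sigma> permutes S \<Longrightarrow> bij (perm_factors \<sigma>)"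
  by (rule o_bij[of "perm_factors (inv \<sigma>)"]) (auto simp: perm_factors_permutes_inverse)

lemma perm_factors_eq_0_iff: "\<sigma> permutes S \<Longrightarrow> perm_factors \<sigma> m = 0 \<longleftrightarrow> m = 0"
  by (metis perm_factors_permutes_inverse(1) perm_factors_zero permutes_inj permutes_inv)

lemma mdeg_add: "mdeg n (a + b) = (\<lambda>i. mdeg n a i + mdeg n b i)"
  by (auto simp: mdeg_def lookup_add sum.distrib)

lemma mdeg_perm_factors:
  assumes "\<sigma> permutes {..<n}"
  shows "mdeg n (perm_factors \<sigma> m) = mdeg n m"
proof
  fix i
  show "mdeg n (perm_factors \<sigma> m) i = mdeg n m i"
    using sum.reindex_bij_betw[OF permutes_imp_bij[OF assms], of "\<lambda>j. Poly_Mapping.lookup m (j, i)"]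
    by (simp add: mdeg_def lookup_perm_factors permutes_inj[OF assms])
qed

lemma symmetric_tensor_iff:
  "symmetric_tensor n p \<longleftrightarrow>
     (\<forall>\<sigma> m. \<sigma> permutes {..<n} \<longrightarrow> Poly_Mapping.lookup p (perm_factors \<sigma> m) = Poly_Mapping.lookup p m)"
proof -
  have "m' = perm_factors \<sigma> m"
    if "\<sigma> permutes {..<n}" "\<forall>j i. Poly_Mapping.lookup m' (j, i) = Poly_Mapping.lookup m (\<sigma> j, i)"
    for \<sigma> m m'
    using that by (intro poly_mapping_eqI) (auto simp: lookup_perm_factors permutes_inj)
  then show ?thesis
    unfolding symmetric_tensor_def by (metis lookup_perm_factors permutes_inj)
qed

lemma symmetric_tensor_add:
  "symmetric_tensor n p \<Longrightarrow> symmetric_tensor n q \<Longrightarrow> symmetric_tensor n (p + q)"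
  by (simp add: symmetric_tensor_iff lookup_add)

lemma symmetric_tensor_const: "symmetric_tensor n (const_tens c)"
  by (auto simp: symmetric_tensor_iff const_tens_def lookup_single when_def perm_factors_eq_0_iff)

lemma symmetric_tensor_mult:
  assumes p: "symmetric_tensor n p" and q: "symmetric_tensor n q"
  shows "symmetric_tensor n (p * q)"
  unfolding symmetric_tensor_iff
proof (intro allI impI)
  fix \<sigma> m assume \<sigma>: "\<sigma> permutes {..<n}"
  let ?\<pi> = "perm_factors \<sigma>"
  have bij: "bij ?\<pi>" using \<sigma> by (rule bij_perm_factors)
  have sum_eq: "?\<pi> m = ?\<pi> l + ?\<pi> l' \<longleftrightarrow> m = l + l'" for l l'
    by (metis bij_is_inj[OF bij] injD perm_factors_add permutes_inj[OF \<sigma>])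
  have invariant: "Poly_Mapping.lookup p (?\<pi> l) = Poly_Mapping.lookup p l"
    "Poly_Mapping.lookup q (?\<pi> l) = Poly_Mapping.lookup q l" for l
    using p q \<sigma> by (simp_all add: symmetric_tensor_iff)
  have "Poly_Mapping.lookup (p * q) (?\<pi> m)
      = Sum_any (\<lambda>l. Poly_Mapping.lookup p (?\<pi> l) *
          Sum_any (\<lambda>l'. Poly_Mapping.lookup q (?\<pi> l') when ?\<pi> m = ?\<pi> l + ?\<pi> l'))"
    unfolding lookup_mult
    by (rule Sum_any.reindex_cong[OF bij])
       (auto simp: fun_eq_iff intro!: arg_cong[where f = "(*) _"] Sum_any.reindex_cong[OF bij])
  also have "\<dots> = Poly_Mapping.lookup (p * q) m"
    by (simp add: lookup_mult sum_eq invariant)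
  finally show "Poly_Mapping.lookup (p * q) (?\<pi> m) = Poly_Mapping.lookup (p * q) m" .
qed

lemma tensor_space_add:
  "p \<in> tensor_space r n \<Longrightarrow> q \<in> tensor_space r n \<Longrightarrow> p + q \<in> tensor_space r n"
  by (auto simp: tensor_space_def dest!: subsetD[OF keys_add])

lemma tensor_space_mult:
  "p \<in> tensor_space r n \<Longrightarrow> q \<in> tensor_space r n \<Longrightarrow> p * q \<in> tensor_space r n"
  by (fastforce simp: tensor_space_def dest!: subsetD[OF keys_mult] subsetD[OF keys_add])

lemma TS_add: "p \<in> TS r n \<Longrightarrow> q \<in> TS r n \<Longrightarrow> p + q \<in> TS r n"
  by (simp add: TS_def tensor_space_add symmetric_tensor_add)

lemma TS_mult: "p \<in> TS r n \<Longrightarrow> q \<in> TS r n \<Longrightarrow> p * q \<in> TS r n"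
  by (simp add: TS_def tensor_space_mult symmetric_tensor_mult)

lemma const_tens_in_TS: "const_tens c \<in> TS r n"
  using symmetric_tensor_const[of n c] by (simp add: TS_def tensor_space_def const_tens_def)

lemma Gamma_less_imp_TS: "p \<in> Gamma_less r n \<gamma> \<Longrightarrow> p \<in> TS r n"
  by (induction rule: Gamma_less.induct) (auto simp: TS_add TS_mult const_tens_in_TS)

definition linear_form :: "(monom \<Rightarrow> 'a::comm_ring_1) \<Rightarrow> 'a tens \<Rightarrow> 'a" where
  "linear_form W f = (\<Sum>m\<in>Poly_Mapping.keys f. W m * Poly_Mapping.lookup f m)"

lemma linear_form_add: "linear_form W (f + g) = linear_form W f + linear_form W g"
  unfolding linear_form_def by (rule setsum_keys_plus_distrib) (simp_all add: distrib_left)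

lemma linear_form_zero: "linear_form W 0 = 0"
  by (simp add: linear_form_def)

lemma linear_form_sum: "linear_form W (\<Sum>x\<in>A. F x) = (\<Sum>x\<in>A. linear_form W (F x))"
  by (induction A rule: infinite_finite_induct) (simp_all add: linear_form_zero linear_form_add)

lemma linear_form_single: "linear_form W (Poly_Mapping.single m c) = W m * c"
  by (simp add: linear_form_def)

lemma linear_form_scale:
  "linear_form W (Poly_Mapping.map (\<lambda>c. a * c) f) = a * linear_form W f"
proof -
  have "linear_form W (Poly_Mapping.map (\<lambda>c. a * c) f)
      = (\<Sum>m\<in>Poly_Mapping.keys f. W m * Poly_Mapping.lookup (Poly_Mapping.map (\<lambda>c. a * c) f) m)"
    unfolding linear_form_def
    by (rule sum.mono_neutral_left) (auto simp: in_keys_iff map.rep_eq when_def)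
  also have "\<dots> = (\<Sum>m\<in>Poly_Mapping.keys f. a * (W m * Poly_Mapping.lookup f m))"
    by (rule sum.cong) (auto simp: map.rep_eq when_def)
  finally show ?thesis
    by (simp add: linear_form_def sum_distrib_left)
qed

lemma linear_form_mult:
  "linear_form W (p * q) = (\<Sum>a\<in>Poly_Mapping.keys p. \<Sum>b\<in>Poly_Mapping.keys q.
      W (a + b) * (Poly_Mapping.lookup p a * Poly_Mapping.lookup q b))"
proof -
  have expand: "f = (\<Sum>a\<in>Poly_Mapping.keys f. Poly_Mapping.single a (Poly_Mapping.lookup f a))"
    for f :: "'a tens"
    by (rule poly_mapping_eqI) (auto simp: lookup_sum lookup_single when_def in_keys_iff)
  have "p * q = (\<Sum>a\<in>Poly_Mapping.keys p. \<Sum>b\<in>Poly_Mapping.keys q.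
      Poly_Mapping.single (a + b) (Poly_Mapping.lookup p a * Poly_Mapping.lookup q b))"
    by (subst expand[of p], subst expand[of q]) (simp add: sum_product mult_single)
  then show ?thesis by (simp add: linear_form_sum linear_form_single)
qed

section \<open>A sign-reversing involution on pairs of monomials\<close>

definition occupies :: "monom \<Rightarrow> nat \<Rightarrow> bool" where
  "occupies m j \<longleftrightarrow> (\<exists>i. Poly_Mapping.lookup m (j, i) \<noteq> 0)"

definition num_factors :: "monom \<Rightarrow> nat" where
  "num_factors m = card {j. occupies m j}"

definition packed :: "monom \<Rightarrow> bool" where
  "packed m \<longleftrightarrow> {j. occupies m j} = {..<num_factors m}"

lemma finite_occupies: "finite {j. occupies m j}"
proof -
  have "{j. occupies m j} \<subseteq> fst ` Poly_Mapping.keys m"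
    by (force simp: occupies_def in_keys_iff)
  then show ?thesis by (rule finite_subset) simp
qed

lemma packed_num_factors_iff: "packed m \<and> num_factors m = L \<longleftrightarrow> {j. occupies m j} = {..<L}"
proof
  assume "{j. occupies m j} = {..<L}"
  moreover from this have "num_factors m = L" by (simp add: num_factors_def)
  ultimately show "packed m \<and> num_factors m = L" by (simp add: packed_def)
qed (simp add: packed_def)

lemma occupies_add: "occupies (a + b) j \<longleftrightarrow> occupies a j \<or> occupies b j"
  by (auto simp: occupies_def lookup_add)

lemma packed_add_occupies_iff:
  assumes "packed (a + b)"
  shows "occupies a j \<or> occupies b j \<longleftrightarrow> j < num_factors (a + b)"
proof -
  have "{j. occupies a j \<or> occupies b j} = {..<num_factors (a + b)}"
    using assms by (simp add: packed_def occupies_add)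
  then show ?thesis unfolding set_eq_iff by blast
qed

lemma occupies_perm_factors: "inj \<sigma> \<Longrightarrow> occupies (perm_factors \<sigma> m) j \<longleftrightarrow> occupies m (\<sigma> j)"
  by (simp add: occupies_def lookup_perm_factors)

lemma num_factors_add_le: "num_factors (a + b) \<le> num_factors a + num_factors b"
  unfolding num_factors_def occupies_add Collect_disj_eq by (rule card_Un_le)

lemma num_factors_add_less:
  assumes "occupies a j" "occupies b j"
  shows "num_factors (a + b) < num_factors a + num_factors b"
proof -
  have "card ({j. occupies a j} \<inter> {j. occupies b j}) > 0"
    using assms by (auto simp: card_gt_0_iff finite_occupies)
  then show ?thesis
    using card_Un_Int[OF finite_occupies finite_occupies, of a b]
    by (simp add: num_factors_def occupies_add Collect_disj_eq)
qed

lemma num_factors_le_total_degree: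
  assumes keys: "Poly_Mapping.keys m \<subseteq> {..<n} \<times> {..<r}"
  shows "num_factors m \<le> (\<Sum>i<r. mdeg n m i)"
proof -
  let ?row = "\<lambda>j. \<Sum>i<r. Poly_Mapping.lookup m (j, i)"
  have row_pos: "1 \<le> ?row j" if occ: "occupies m j" for j
  proof -
    obtain i where i: "Poly_Mapping.lookup m (j, i) \<noteq> 0"
      using occ unfolding occupies_def by blast
    then have "(j, i) \<in> Poly_Mapping.keys m" by (simp add: in_keys_iff)
    then have "i < r" using keys by blast
    with i show ?thesis
      using member_le_sum[of i "{..<r}" "\<lambda>i. Poly_Mapping.lookup m (j, i)"] by simp
  qed
  have occ_n: "{j. occupies m j} \<subseteq> {..<n}"
    using keys unfolding occupies_def in_keys_iff[symmetric] by blast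
  have "num_factors m = (\<Sum>j\<in>{j. occupies m j}. 1)"
    by (simp add: num_factors_def)
  also have "\<dots> \<le> (\<Sum>j\<in>{j. occupies m j}. ?row j)"
    using row_pos by (intro sum_mono) blast
  also have "\<dots> \<le> (\<Sum>j<n. ?row j)"
    by (rule sum_mono2) (use occ_n in auto)
  also have "\<dots> = (\<Sum>i<r. mdeg n m i)"
    unfolding mdeg_def by (rule sum.swap)
  finally show ?thesis .
qed

text \<open>\<open>perm_factors (cycle_down c L)\<close> moves the factors \<open>c, \<dots>, L - 1\<close> one place up and puts
  factor \<open>L\<close> at position \<open>c\<close>; \<open>cycle_up\<close> undoes this.\<close>

definition cycle_down :: "nat \<Rightarrow> nat \<Rightarrow> nat \<Rightarrow> nat" where
  "cycle_down c L j = (if j = c then L else if c < j \<and> j \<le> L then j - 1 else j)"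

definition cycle_up :: "nat \<Rightarrow> nat \<Rightarrow> nat \<Rightarrow> nat" where
  "cycle_up c L j = (if j = L then c else if c \<le> j \<and> j < L then j + 1 else j)"

lemma cycle_down_up: "c \<le> L \<Longrightarrow> cycle_down c L (cycle_up c L j) = j"
  by (auto simp: cycle_down_def cycle_up_def)

lemma cycle_up_down: "c \<le> L \<Longrightarrow> cycle_up c L (cycle_down c L j) = j"
  by (auto simp: cycle_down_def cycle_up_def)

lemma inj_cycle_down: "c \<le> L \<Longrightarrow> inj (cycle_down c L)"
  by (metis injI cycle_up_down)

lemma inj_cycle_up: "c \<le> L \<Longrightarrow> inj (cycle_up c L)"
  by (metis injI cycle_down_up)

lemma perm_factors_cycle_up_down:
  "c \<le> L \<Longrightarrow> perm_factors (cycle_up c L) (perm_factors (cycle_down c L) m) = m"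
  by (rule perm_factors_inverse) (simp_all add: cycle_down_up cycle_up_down)

lemma perm_factors_cycle_down_up:
  "c \<le> L \<Longrightarrow> perm_factors (cycle_down c L) (perm_factors (cycle_up c L) m) = m"
  by (rule perm_factors_inverse) (simp_all add: cycle_down_up cycle_up_down)

lemma cycle_down_permutes: "c \<le> L \<Longrightarrow> L < n \<Longrightarrow> cycle_down c L permutes {..<n}"
  by (rule bij_imp_permutes, rule bij_betw_byWitness[where f' = "cycle_up c L"])
     (auto simp: cycle_down_def cycle_up_def)

lemma cycle_up_permutes: "c \<le> L \<Longrightarrow> L < n \<Longrightarrow> cycle_up c L permutes {..<n}"
  by (rule bij_imp_permutes, rule bij_betw_byWitness[where f' = "cycle_down c L"])
     (auto simp: cycle_down_def cycle_up_def)

definition pivot :: "monom \<Rightarrow> monom \<Rightarrow> nat \<Rightarrow> bool" where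
  "pivot a b j \<longleftrightarrow>
     occupies a j \<and> (occupies b j \<or> \<not> occupies a (Suc j) \<and> occupies b (Suc j))"

definition first_pivot :: "monom \<Rightarrow> monom \<Rightarrow> nat \<Rightarrow> bool" where
  "first_pivot a b j \<longleftrightarrow> pivot a b j \<and> (\<forall>i<j. \<not> pivot a b i)"

lemma ex_first_pivot: "pivot a b j \<Longrightarrow> \<exists>j. first_pivot a b j"
  unfolding first_pivot_def by (metis exists_least_iff)

text \<open>At the first pivot \<open>j\<close>, a factor shared by \<open>a\<close> and \<open>b\<close> is split, the part of \<open>b\<close>
  moving to a new factor \<open>j + 1\<close>; conversely an \<open>a\<close>-only factor \<open>j\<close> followed by a \<open>b\<close>-only
  factor \<open>j + 1\<close> is merged. This is an involution that changes the number of factors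
  of \<open>a + b\<close> by one.\<close>

definition pivot_swap :: "monom \<times> monom \<Rightarrow> monom \<times> monom" where
  "pivot_swap = (\<lambda>(a, b).
     if \<exists>j. pivot a b j then
       let j = LEAST j. pivot a b j; L = num_factors (a + b) in
       if occupies b j
       then (perm_factors (cycle_down (Suc j) L) a, perm_factors (cycle_down j L) b)
       else (perm_factors (cycle_up (Suc j) (L - 1)) a, perm_factors (cycle_up j (L - 1)) b)
     else (a, b))"

lemma Least_pivot: "first_pivot a b j \<Longrightarrow> (LEAST i. pivot a b i) = j"
  by (intro Least_equality) (auto simp: first_pivot_def not_less[symmetric])

lemma pivot_swap_split_eq:
  "first_pivot a b j \<Longrightarrow> occupies b j \<Longrightarrow> pivot_swap (a, b) =
     (perm_factors (cycle_down (Suc j) (num_factors (a + b))) a,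
      perm_factors (cycle_down j (num_factors (a + b))) b)"
  by (auto simp: pivot_swap_def Let_def Least_pivot first_pivot_def)

lemma pivot_swap_merge_eq:
  "first_pivot a b j \<Longrightarrow> \<not> occupies b j \<Longrightarrow> pivot_swap (a, b) =
     (perm_factors (cycle_up (Suc j) (num_factors (a + b) - 1)) a,
      perm_factors (cycle_up j (num_factors (a + b) - 1)) b)"
  by (auto simp: pivot_swap_def Let_def Least_pivot first_pivot_def)

lemma first_pivot_split:
  assumes packed: "packed (a + b)" and first: "first_pivot a b j" and bj: "occupies b j"
  defines "L \<equiv> num_factors (a + b)"
  defines "a' \<equiv> perm_factors (cycle_down (Suc j) L) a" and "b' \<equiv> perm_factors (cycle_down j L) b"
  shows "packed (a' + b')" "num_factors (a' + b') = Suc L" "first_pivot a' b' j" "\<not> occupies b' j"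
    "j < L"
proof -
  note occ = packed_add_occupies_iff[OF packed, folded L_def]
  have aj: "occupies a j" using first by (simp add: first_pivot_def pivot_def)
  show jL: "j < L" using occ aj by blast
  have oa: "occupies a' i \<longleftrightarrow> occupies a (cycle_down (Suc j) L i)" for i
    using jL by (simp add: a'_def occupies_perm_factors inj_cycle_down)
  have ob: "occupies b' i \<longleftrightarrow> occupies b (cycle_down j L i)" for i
    using jL by (simp add: b'_def occupies_perm_factors inj_cycle_down)
  have "occupies a' i \<or> occupies b' i \<longleftrightarrow> i < Suc L" for i
  proof -
    consider "i < j" | "i = j" | "i = Suc j" | "Suc j < i" "i \<le> L" | "L < i" by linarith
    then show ?thesis
    proof cases
      case 1 then show ?thesis using occ[of i] jL by (auto simp: oa ob cycle_down_def)
    next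
      case 2 then show ?thesis using aj jL by (auto simp: oa ob cycle_down_def)
    next
      case 3 then show ?thesis using bj jL by (auto simp: oa ob cycle_down_def)
    next
      case 4 then show ?thesis using occ[of "i - 1"] by (auto simp: oa ob cycle_down_def)
    next
      case 5 then show ?thesis using occ[of i] jL by (auto simp: oa ob cycle_down_def)
    qed
  qed
  then have "{i. occupies (a' + b') i} = {..<Suc L}"
    by (auto simp: occupies_add)
  then show "packed (a' + b')" "num_factors (a' + b') = Suc L"
    using packed_num_factors_iff[of "a' + b'" "Suc L"] by simp_all
  show "\<not> occupies b' j" using occ[of L] by (simp add: ob cycle_down_def)
  have "pivot a' b' j" using aj bj jL occ[of L] by (auto simp: pivot_def oa ob cycle_down_def)
  moreover have "\<not> pivot a' b' i" if "i < j" for i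
    using first that aj jL occ[of L]
    by (cases "Suc i = j") (auto simp: first_pivot_def pivot_def oa ob cycle_down_def)
  ultimately show "first_pivot a' b' j" by (simp add: first_pivot_def)
qed

lemma first_pivot_merge:
  assumes packed: "packed (a + b)" and first: "first_pivot a b j" and bj: "\<not> occupies b j"
  defines "L \<equiv> num_factors (a + b)"
  defines "a' \<equiv> perm_factors (cycle_up (Suc j) (L - 1)) a"
    and "b' \<equiv> perm_factors (cycle_up j (L - 1)) b"
  shows "packed (a' + b')" "num_factors (a' + b') = L - 1" "first_pivot a' b' j" "occupies b' j"
    "Suc j < L"
proof -
  note occ = packed_add_occupies_iff[OF packed, folded L_def]
  have aj: "occupies a j" and aj1: "\<not> occupies a (Suc j)" and bj1: "occupies b (Suc j)"
    using first bj by (auto simp: first_pivot_def pivot_def)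
  show jL: "Suc j < L" using occ bj1 by blast
  have oa: "occupies a' i \<longleftrightarrow> occupies a (cycle_up (Suc j) (L - 1) i)" for i
    using jL by (simp add: a'_def occupies_perm_factors inj_cycle_up)
  have ob: "occupies b' i \<longleftrightarrow> occupies b (cycle_up j (L - 1) i)" for i
    using jL by (simp add: b'_def occupies_perm_factors inj_cycle_up)
  have "occupies a' i \<or> occupies b' i \<longleftrightarrow> i < L - 1" for i
  proof -
    consider "i < j" | "i = j" | "j < i" "i < L - 1" | "i = L - 1" | "L - 1 < i" by linarith
    then show ?thesis
    proof cases
      case 1 then show ?thesis using occ[of i] jL by (auto simp: oa ob cycle_up_def)
    next
      case 2 then show ?thesis using aj jL by (auto simp: oa ob cycle_up_def)
    next
      case 3 then show ?thesis using occ[of "Suc i"] by (auto simp: oa ob cycle_up_def)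
    next
      case 4 then show ?thesis using aj1 bj jL by (auto simp: oa ob cycle_up_def)
    next
      case 5 then show ?thesis using occ[of i] by (auto simp: oa ob cycle_up_def)
    qed
  qed
  then have "{i. occupies (a' + b') i} = {..<L - 1}"
    by (auto simp: occupies_add)
  then show "packed (a' + b')" "num_factors (a' + b') = L - 1"
    using packed_num_factors_iff[of "a' + b'" "L - 1"] by simp_all
  have "j < L - 1" using jL by linarith
  then show b'j: "occupies b' j" using bj1 by (simp add: ob cycle_up_def)
  have "pivot a' b' j" using aj b'j jL by (auto simp: pivot_def oa cycle_up_def)
  moreover have "\<not> pivot a' b' i" if "i < j" for i
    using first that aj jL
    by (cases "Suc i = j") (auto simp: first_pivot_def pivot_def oa ob cycle_up_def)
  ultimately show "first_pivot a' b' j" by (simp add: first_pivot_def)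
qed

lemma eq_0_if_no_pivot:
  assumes packed: "packed (a + b)" and a0: "occupies a 0" and no_pivot: "\<And>j. \<not> pivot a b j"
  shows "b = 0"
proof -
  note occ = packed_add_occupies_iff[OF packed]
  have "j < num_factors (a + b) \<longrightarrow> occupies a j \<and> \<not> occupies b j" for j
  proof (induction j)
    case 0 then show ?case using a0 no_pivot[of 0] by (auto simp: pivot_def)
  next
    case (Suc j)
    then show ?case using no_pivot[of j] no_pivot[of "Suc j"] occ[of "Suc j"] by (auto simp: pivot_def)
  qed
  then have "\<not> occupies b j" for j using occ by blast
  then show "b = 0" by (intro poly_mapping_eqI) (auto simp: occupies_def)
qed

lemma pivot_swap_perm_factors:
  assumes packed: "packed (a + b)" and a0: "occupies a 0" and "b \<noteq> 0"
    and bound: "num_factors a + num_factors b \<le> n"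
  obtains \<sigma> \<tau> where "\<sigma> permutes {..<n}" "\<tau> permutes {..<n}" "\<sigma> 0 = 0"
    "pivot_swap (a, b) = (perm_factors \<sigma> a, perm_factors \<tau> b)"
    "pivot_swap (perm_factors \<sigma> a, perm_factors \<tau> b) = (a, b)"
    "packed (perm_factors \<sigma> a + perm_factors \<tau> b)"
    "odd (num_factors (perm_factors \<sigma> a + perm_factors \<tau> b) + num_factors (a + b))"
proof -
  obtain j where first: "first_pivot a b j"
    using eq_0_if_no_pivot[OF packed a0] \<open>b \<noteq> 0\<close> ex_first_pivot by blast
  define L where "L = num_factors (a + b)"
  show thesis
  proof (cases "occupies b j")
    case True
    let ?a' = "perm_factors (cycle_down (Suc j) L) a" and ?b' = "perm_factors (cycle_down j L) b"
    note split = first_pivot_split[OF packed first True, folded L_def]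
    have "L < n"
      using num_factors_add_less[of a j b] first True bound
      by (simp add: L_def first_pivot_def pivot_def)
    moreover have "pivot_swap (a, b) = (?a', ?b')"
      using pivot_swap_split_eq[OF first True] by (simp add: L_def)
    moreover have "pivot_swap (?a', ?b') = (a, b)"
      using pivot_swap_merge_eq[OF split(3,4)] split(2,5) by (simp add: perm_factors_cycle_up_down)
    moreover have "odd (Suc L + L)" by simp
    ultimately show thesis using split
      by (intro that[of "cycle_down (Suc j) L" "cycle_down j L"])
         (auto intro: cycle_down_permutes simp: cycle_down_def simp flip: L_def)
  next
    case False
    let ?a' = "perm_factors (cycle_up (Suc j) (L - 1)) a" and ?b' = "perm_factors (cycle_up j (L - 1)) b"
    note merge = first_pivot_merge[OF packed first False, folded L_def]
    have "L \<le> n" using num_factors_add_le[of a b] bound by (simp add: L_def)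
    moreover have "pivot_swap (a, b) = (?a', ?b')"
      using pivot_swap_merge_eq[OF first False] by (simp add: L_def)
    moreover have "pivot_swap (?a', ?b') = (a, b)"
      using pivot_swap_split_eq[OF merge(3,4)] merge(2,5) by (simp add: perm_factors_cycle_down_up)
    moreover have "odd (L - 1 + L)" using merge(5) by presburger
    ultimately show thesis using merge
      by (intro that[of "cycle_up (Suc j) (L - 1)" "cycle_up j (L - 1)"])
         (auto intro: cycle_up_permutes simp: cycle_up_def simp flip: L_def)
  qed
qed

section \<open>The alternating linear form\<close>

definition has_mdeg :: "nat \<Rightarrow> nat \<Rightarrow> (nat \<Rightarrow> nat) \<Rightarrow> monom \<Rightarrow> bool" where
  "has_mdeg r n D m \<longleftrightarrow> (\<forall>i<r. mdeg n m i = D i)"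

definition alt_weight :: "nat \<Rightarrow> nat \<Rightarrow> (nat \<Rightarrow> nat) \<Rightarrow> nat \<Rightarrow> monom \<Rightarrow> 'a::comm_ring_1" where
  "alt_weight r n D i m =
     (if packed m \<and> has_mdeg r n D m
      then (- 1) ^ Suc (num_factors m) * of_nat (Poly_Mapping.lookup m (0, i)) else 0)"

definition alt_weight_left :: "nat \<Rightarrow> nat \<Rightarrow> (nat \<Rightarrow> nat) \<Rightarrow> nat \<Rightarrow> monom \<Rightarrow> monom \<Rightarrow> 'a::comm_ring_1" where
  "alt_weight_left r n D i a b =
     (if packed (a + b) \<and> has_mdeg r n D (a + b)
      then (- 1) ^ Suc (num_factors (a + b)) * of_nat (Poly_Mapping.lookup a (0, i)) else 0)"

lemma alt_weight_add:
  "alt_weight r n D i (a + b) = alt_weight_left r n D i a b + alt_weight_left r n D i b a"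
  by (simp add: alt_weight_def alt_weight_left_def lookup_add add.commute distrib_left)

lemma alt_weight_zero: "\<exists>i<r. D i \<noteq> 0 \<Longrightarrow> alt_weight r n D i' 0 = 0"
  by (auto simp: alt_weight_def has_mdeg_def mdeg_def)

lemma num_factors_add_le_mdeg:
  assumes "Poly_Mapping.keys a \<subseteq> {..<n} \<times> {..<r}" "Poly_Mapping.keys b \<subseteq> {..<n} \<times> {..<r}"
    and "has_mdeg r n D (a + b)"
  shows "num_factors a + num_factors b \<le> (\<Sum>i<r. D i)"
proof -
  have "num_factors a + num_factors b \<le> (\<Sum>i<r. mdeg n a i) + (\<Sum>i<r. mdeg n b i)"
    using assms(1,2) by (intro add_mono num_factors_le_total_degree)
  also have "\<dots> = (\<Sum>i<r. D i)"
    using assms(3) by (simp add: has_mdeg_def mdeg_add sum.distrib[symmetric])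
  finally show ?thesis .
qed

lemma alt_weight_left_pivot_swap:
  fixes p q :: "'a::comm_ring_1 tens"
  assumes p: "p \<in> TS r n" and q: "q \<in> TS r n" and bound: "(\<Sum>i<r. D i) \<le> n"
    and a: "a \<in> Poly_Mapping.keys p" and b: "b \<in> Poly_Mapping.keys q" "b \<noteq> 0"
    and weight: "alt_weight_left r n D i a b \<noteq> (0::'a)"
  obtains a' b' where "pivot_swap (a, b) = (a', b')" "pivot_swap (a', b') = (a, b)" "(a', b') \<noteq> (a, b)"
    "a' \<in> Poly_Mapping.keys p" "b' \<in> Poly_Mapping.keys q" "a' \<noteq> 0" "b' \<noteq> 0"
    "alt_weight_left r n D i a' b' * (Poly_Mapping.lookup p a' * Poly_Mapping.lookup q b')
      = - (alt_weight_left r n D i a b * (Poly_Mapping.lookup p a * Poly_Mapping.lookup q b))"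
proof -
  have packed: "packed (a + b)" and deg: "has_mdeg r n D (a + b)"
    using weight by (auto simp: alt_weight_left_def split: if_splits)
  have a0: "Poly_Mapping.lookup a (0, i) \<noteq> 0"
    using weight by (metis alt_weight_left_def mult_zero_right of_nat_0)
  then have "occupies a 0" by (auto simp: occupies_def)
  moreover have "num_factors a + num_factors b \<le> n"
    using num_factors_add_le_mdeg[OF _ _ deg] a b p q bound by (force simp: TS_def tensor_space_def)
  ultimately obtain \<sigma> \<tau> where \<sigma>: "\<sigma> permutes {..<n}" and \<tau>: "\<tau> permutes {..<n}" and "\<sigma> 0 = 0"
    and swap: "pivot_swap (a, b) = (perm_factors \<sigma> a, perm_factors \<tau> b)"
      "pivot_swap (perm_factors \<sigma> a, perm_factors \<tau> b) = (a, b)"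
    and packed': "packed (perm_factors \<sigma> a + perm_factors \<tau> b)"
    and odd: "odd (num_factors (perm_factors \<sigma> a + perm_factors \<tau> b) + num_factors (a + b))"
    using pivot_swap_perm_factors[OF packed _ b(2)] by blast
  let ?a' = "perm_factors \<sigma> a" and ?b' = "perm_factors \<tau> b"
  have coeff': "Poly_Mapping.lookup p ?a' = Poly_Mapping.lookup p a"
    "Poly_Mapping.lookup q ?b' = Poly_Mapping.lookup q b"
    using p q \<sigma> \<tau> by (simp_all add: TS_def symmetric_tensor_iff)
  have deg': "has_mdeg r n D (?a' + ?b')"
    using deg \<sigma> \<tau> by (simp add: has_mdeg_def mdeg_add mdeg_perm_factors)
  have a0': "Poly_Mapping.lookup ?a' (0, i) = Poly_Mapping.lookup a (0, i)"
    using \<open>\<sigma> 0 = 0\<close> \<sigma> by (simp add: lookup_perm_factors permutes_inj)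
  have "(- 1 :: 'a) ^ num_factors (?a' + ?b') = - ((- 1) ^ num_factors (a + b))"
    using odd by (simp add: minus_one_power_iff)
  then have "alt_weight_left r n D i ?a' ?b' = - (alt_weight_left r n D i a b :: 'a)"
    using packed packed' deg deg' a0' by (simp add: alt_weight_left_def)
  moreover have "?a' \<noteq> 0" "?b' \<noteq> 0"
    using a0 a0' b(2) \<tau> by (auto simp: perm_factors_eq_0_iff)
  moreover have "(?a', ?b') \<noteq> (a, b)" using odd by auto
  ultimately show thesis
    using that swap coeff' a b by (simp add: in_keys_iff)
qed

lemma sum_alt_weight_left_eq_0:
  fixes p q :: "'a::comm_ring_1 tens"
  assumes p: "p \<in> TS r n" and q: "q \<in> TS r n" and bound: "(\<Sum>i<r. D i) \<le> n"
  shows "(\<Sum>a\<in>Poly_Mapping.keys p - {0}. \<Sum>b\<in>Poly_Mapping.keys q - {0}.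
            alt_weight_left r n D i a b * (Poly_Mapping.lookup p a * Poly_Mapping.lookup q b)) = 0"
proof -
  define f where "f = (\<lambda>(a, b).
    alt_weight_left r n D i a b * (Poly_Mapping.lookup p a * Poly_Mapping.lookup q b) :: 'a)"
  define S where "S = (Poly_Mapping.keys p - {0}) \<times> (Poly_Mapping.keys q - {0})"
  define X where "X = {x \<in> S. f x \<noteq> 0}"
  have involution: "f (pivot_swap x) + f x = 0 \<and> pivot_swap x \<in> X
      \<and> pivot_swap (pivot_swap x) = x \<and> pivot_swap x \<noteq> x" if "x \<in> X" for x
  proof -
    obtain a b where x: "x = (a, b)" by fastforce
    have ab: "a \<in> Poly_Mapping.keys p" "b \<in> Poly_Mapping.keys q" "b \<noteq> 0" and fx: "f (a, b) \<noteq> 0"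
      using that by (auto simp: X_def S_def x)
    have weight: "alt_weight_left r n D i a b \<noteq> (0::'a)"
    proof
      assume "alt_weight_left r n D i a b = (0::'a)"
      then have "f (a, b) = 0" by (simp add: f_def)
      with fx show False by contradiction
    qed
    obtain a' b' where swap: "pivot_swap (a, b) = (a', b')" "pivot_swap (a', b') = (a, b)"
        "(a', b') \<noteq> (a, b)"
      and mem: "a' \<in> Poly_Mapping.keys p" "b' \<in> Poly_Mapping.keys q" "a' \<noteq> 0" "b' \<noteq> 0"
      and "alt_weight_left r n D i a' b' * (Poly_Mapping.lookup p a' * Poly_Mapping.lookup q b')
        = - (alt_weight_left r n D i a b * (Poly_Mapping.lookup p a * Poly_Mapping.lookup q b))"
      using ab weight by (rule alt_weight_left_pivot_swap[OF p q bound])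
    then have "f (a', b') = - f (a, b)" by (simp add: f_def)
    with fx swap mem show ?thesis by (auto simp: x X_def S_def)
  qed
  have "(\<Sum>a\<in>Poly_Mapping.keys p - {0}. \<Sum>b\<in>Poly_Mapping.keys q - {0}.
          alt_weight_left r n D i a b * (Poly_Mapping.lookup p a * Poly_Mapping.lookup q b)) = sum f S"
    by (simp add: S_def f_def sum.cartesian_product)
  also have "\<dots> = sum f X"
    by (rule sum.mono_neutral_right) (auto simp: X_def S_def)
  also have "\<dots> = 0"
    by (rule sum_involution_eq_0[where h = pivot_swap]) (use involution in blast)+
  finally show ?thesis .
qed

lemma sum_alt_weight_add_eq_0:
  fixes p q :: "'a::comm_ring_1 tens"
  assumes p: "p \<in> TS r n" and q: "q \<in> TS r n" and bound: "(\<Sum>i<r. D i) \<le> n"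
  shows "(\<Sum>a\<in>Poly_Mapping.keys p - {0}. \<Sum>b\<in>Poly_Mapping.keys q - {0}.
            alt_weight r n D i (a + b) * (Poly_Mapping.lookup p a * Poly_Mapping.lookup q b)) = 0"
proof -
  let ?P = "Poly_Mapping.keys p - {0}" and ?Q = "Poly_Mapping.keys q - {0}"
  let ?c = "\<lambda>a b. Poly_Mapping.lookup p a * Poly_Mapping.lookup q b"
  have "(\<Sum>a\<in>?P. \<Sum>b\<in>?Q. alt_weight r n D i (a + b) * ?c a b)
    = (\<Sum>a\<in>?P. \<Sum>b\<in>?Q. alt_weight_left r n D i a b * ?c a b)
      + (\<Sum>a\<in>?P. \<Sum>b\<in>?Q. alt_weight_left r n D i b a * ?c a b)"
    by (simp add: alt_weight_add distrib_right sum.distrib)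
  also have "(\<Sum>a\<in>?P. \<Sum>b\<in>?Q. alt_weight_left r n D i b a * ?c a b)
    = (\<Sum>b\<in>?Q. \<Sum>a\<in>?P. alt_weight_left r n D i b a
        * (Poly_Mapping.lookup q b * Poly_Mapping.lookup p a))"
    by (subst sum.swap) (simp add: mult.commute)
  finally show ?thesis
    using sum_alt_weight_left_eq_0[OF p q bound] sum_alt_weight_left_eq_0[OF q p bound] by simp
qed

lemma linear_form_alt_weight_mult:
  fixes p q :: "'a::comm_ring_1 tens"
  assumes p: "p \<in> TS r n" and q: "q \<in> TS r n"
    and bound: "(\<Sum>i<r. D i) \<le> n" and D: "\<exists>i<r. D i \<noteq> 0"
  shows "linear_form (alt_weight r n D i) (p * q)
    = Poly_Mapping.lookup p 0 * linear_form (alt_weight r n D i) q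
      + Poly_Mapping.lookup q 0 * linear_form (alt_weight r n D i) p"
proof -
  let ?W = "alt_weight r n D i :: monom \<Rightarrow> 'a"
  let ?P = "Poly_Mapping.keys p" and ?Q = "Poly_Mapping.keys q"
  let ?c = "\<lambda>a b. Poly_Mapping.lookup p a * Poly_Mapping.lookup q b"
  have split_0: "sum g A = g 0 + sum g (A - {0})" if "finite A" "0 \<notin> A \<Longrightarrow> g 0 = 0"
    for g :: "monom \<Rightarrow> 'a" and A
    using that by (cases "0 \<in> A") (simp_all add: sum.remove)
  have "linear_form ?W (p * q) = (\<Sum>a\<in>?P. \<Sum>b\<in>?Q. ?W (a + b) * ?c a b)"
    by (rule linear_form_mult)
  also have "\<dots> = (\<Sum>b\<in>?Q. ?W b * ?c 0 b) + (\<Sum>a\<in>?P - {0}. \<Sum>b\<in>?Q. ?W (a + b) * ?c a b)"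
    using split_0[of ?P "\<lambda>a. \<Sum>b\<in>?Q. ?W (a + b) * ?c a b"] by (simp add: in_keys_iff)
  also have "(\<Sum>a\<in>?P - {0}. \<Sum>b\<in>?Q. ?W (a + b) * ?c a b)
    = (\<Sum>a\<in>?P - {0}. ?W a * ?c a 0) + (\<Sum>a\<in>?P - {0}. \<Sum>b\<in>?Q - {0}. ?W (a + b) * ?c a b)"
  proof -
    have "(\<Sum>b\<in>?Q. ?W (a + b) * ?c a b) = ?W a * ?c a 0 + (\<Sum>b\<in>?Q - {0}. ?W (a + b) * ?c a b)" for a
      using split_0[of ?Q "\<lambda>b. ?W (a + b) * ?c a b"] by (simp add: in_keys_iff)
    then show ?thesis by (simp add: sum.distrib)
  qed
  also have "(\<Sum>b\<in>?Q. ?W b * ?c 0 b) = Poly_Mapping.lookup p 0 * linear_form ?W q"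
    by (simp add: linear_form_def sum_distrib_left algebra_simps)
  also have "(\<Sum>a\<in>?P - {0}. ?W a * ?c a 0) = Poly_Mapping.lookup q 0 * linear_form ?W p"
    using split_0[of ?P "\<lambda>a. ?W a * Poly_Mapping.lookup p a"]
    by (simp add: linear_form_def alt_weight_zero[OF D] in_keys_iff sum_distrib_left algebra_simps)
  finally show ?thesis
    using sum_alt_weight_add_eq_0[OF p q bound] by (simp add: add.commute)
qed

lemma Gamma_less_linear_form_alt_weight:
  assumes D: "\<exists>i<r. D i \<noteq> 0" and bound: "(\<Sum>i<r. D i) \<le> n"
    and "p \<in> Gamma_less r n D"
  shows "linear_form (alt_weight r n D i) p = (0::'a::comm_ring_1)"
  using assms(3)
proof (induction rule: Gamma_less.induct)
  case (gen p \<delta>)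
  have "\<not> has_mdeg r n D m" if "m \<in> Poly_Mapping.keys p" for m
    using gen.hyps(2,3) that by (auto simp: homogeneous_def has_mdeg_def mdeg_less_def)
  then show ?case by (simp add: linear_form_def alt_weight_def)
next
  case (const c)
  show ?case by (simp add: const_tens_def linear_form_single alt_weight_zero[OF D])
next
  case (add p q)
  then show ?case by (simp add: linear_form_add)
next
  case (mult p q)
  then show ?case
    by (simp add: linear_form_alt_weight_mult[OF Gamma_less_imp_TS Gamma_less_imp_TS bound D])
qed

section \<open>Evaluation on divided powers\<close>

lemma lookup_mon_on:
  assumes "finite S"
  shows "Poly_Mapping.lookup (mon_on r S \<alpha>) (j, i) = (if j \<in> S \<and> i < r then \<alpha> i else 0)"
proof -
  have "Poly_Mapping.lookup (mon_on r S \<alpha>) (j, i)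
      = (\<Sum>j'\<in>S. \<Sum>i'<r. if j' = j \<and> i' = i then \<alpha> i' else 0)"
    by (simp add: mon_on_def lookup_sum lookup_single when_def)
  also have "\<dots> = (\<Sum>j'\<in>S. if j' = j \<and> i < r then \<alpha> i else 0)"
    by (rule sum.cong[OF refl]) (auto simp: if_distrib)
  also have "\<dots> = (if j \<in> S \<and> i < r then \<alpha> i else 0)"
    using assms by (auto simp: sum.delta_remove)
  finally show ?thesis .
qed

lemma occupies_mon_on:
  "finite S \<Longrightarrow> \<exists>i<r. \<alpha> i \<noteq> 0 \<Longrightarrow> occupies (mon_on r S \<alpha>) j \<longleftrightarrow> j \<in> S"
  by (auto simp: occupies_def lookup_mon_on)

lemma mdeg_mon_on:
  assumes "S \<subseteq> {..<n}" "i < r"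
  shows "mdeg n (mon_on r S \<alpha>) i = card S * \<alpha> i"
proof -
  have "finite S" using assms(1) finite_subset by blast
  then have "mdeg n (mon_on r S \<alpha>) i = (\<Sum>j<n. if j \<in> S then \<alpha> i else 0)"
    using assms(2) by (simp add: mdeg_def lookup_mon_on)
  also have "\<dots> = card S * \<alpha> i"
    using assms(1) by (simp add: sum.If_cases Int_absorb1)
  finally show ?thesis .
qed

lemma alt_weight_mon_on:
  assumes S: "S \<subseteq> {..<n}" "card S = k" and "k \<ge> 1" and \<alpha>: "\<exists>i<r. \<alpha> i \<noteq> 0" and "i < r"
  shows "alt_weight r n (\<lambda>i. k * \<alpha> i) i (mon_on r S \<alpha>)
    = (if S = {..<k} then (- 1) ^ Suc k * of_nat (\<alpha> i) else 0)"
proof -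
  have fin: "finite S" using S(1) finite_subset by blast
  have occ: "{j. occupies (mon_on r S \<alpha>) j} = S"
    unfolding set_eq_iff mem_Collect_eq using occupies_mon_on[OF fin \<alpha>] by blast
  then have "num_factors (mon_on r S \<alpha>) = k" using S(2) by (simp add: num_factors_def)
  moreover have "packed (mon_on r S \<alpha>) \<longleftrightarrow> S = {..<k}"
    using occ \<open>num_factors (mon_on r S \<alpha>) = k\<close> by (simp add: packed_def)
  moreover have "has_mdeg r n (\<lambda>i. k * \<alpha> i) (mon_on r S \<alpha>)"
    using mdeg_mon_on[OF S(1)] S(2) by (simp add: has_mdeg_def)
  moreover have "S = {..<k} \<Longrightarrow> Poly_Mapping.lookup (mon_on r S \<alpha>) (0, i) = \<alpha> i"
    using fin \<open>k \<ge> 1\<close> \<open>i < r\<close> by (simp add: lookup_mon_on)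
  ultimately show ?thesis unfolding alt_weight_def by (cases "S = {..<k}") simp_all
qed

lemma linear_form_alt_weight_gamma_prod:
  assumes "k \<ge> 1" "k \<le> n" "\<exists>i<r. \<alpha> i \<noteq> 0" "i < r"
  shows "linear_form (alt_weight r n (\<lambda>i. k * \<alpha> i) i) (gamma_prod r n k \<alpha>)
    = (- 1) ^ Suc k * (of_nat (\<alpha> i) :: 'a::comm_ring_1)"
proof -
  let ?Sets = "{S. S \<subseteq> {..<n} \<and> card S = k}"
  have "finite ?Sets" by (rule finite_subset[of _ "Pow {..<n}"]) auto
  have "linear_form (alt_weight r n (\<lambda>i. k * \<alpha> i) i) (gamma_prod r n k \<alpha>)
      = (\<Sum>S\<in>?Sets. alt_weight r n (\<lambda>i. k * \<alpha> i) i (mon_on r S \<alpha>) :: 'a)"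
    by (simp add: gamma_prod_def linear_form_sum linear_form_single)
  also have "\<dots> = (\<Sum>S\<in>?Sets. if S = {..<k} then (- 1) ^ Suc k * of_nat (\<alpha> i) else 0)"
    using assms by (intro sum.cong refl alt_weight_mon_on) auto
  also have "\<dots> = (- 1) ^ Suc k * of_nat (\<alpha> i)"
    using \<open>finite ?Sets\<close> \<open>k \<le> n\<close> by (simp add: sum.delta')
  finally show ?thesis .
qed

lemma mult_of_nat_Gcd_eq_0:
  fixes a :: "'a::comm_ring_1"
  assumes "finite T" "\<And>t. t \<in> T \<Longrightarrow> a * of_nat t = 0"
  shows "a * of_nat (Gcd T) = 0"
  using assms
proof (induction T rule: finite_induct)
  case (insert t T)
  obtain u v :: int where "u * int t + v * int (Gcd T) = gcd (int t) (int (Gcd T))"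
    using bezout_int by blast
  then have "of_nat (gcd t (Gcd T)) = of_int u * of_nat t + of_int v * (of_nat (Gcd T) :: 'a)"
    by (metis gcd_int_int_eq of_int_add of_int_mult of_int_of_nat_eq)
  then show ?case using insert by (simp add: distrib_left mult.left_commute[of a])
qed simp

theorem proposition7p13:
  fixes a :: "'a::comm_ring_1" and r n k :: nat and \<alpha> :: "nat \<Rightarrow> nat"
  assumes "r \<ge> 1" and "k \<ge> 1"
    and "\<exists>i<r. \<alpha> i \<noteq> 0"
    and "(of_nat (Gcd (\<alpha> ` {..<r})) :: 'a) dvd 1"
    and "n \<ge> k * (\<Sum>i<r. \<alpha> i)"
    and "Poly_Mapping.map (\<lambda>c. a * c) (gamma_prod r n k \<alpha>)
           \<in> Gamma_less r n (\<lambda>i. k * \<alpha> i)"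
  shows "a = 0"
proof -
  obtain i1 where i1: "i1 < r" "\<alpha> i1 \<noteq> 0" using assms(3) by blast
  have D: "\<exists>i<r. k * \<alpha> i \<noteq> 0" using i1 assms(2) by auto
  have bound: "(\<Sum>i<r. k * \<alpha> i) \<le> n" using assms(5) by (simp add: sum_distrib_left)
  have "\<alpha> i1 \<le> (\<Sum>i<r. \<alpha> i)" by (rule member_le_sum) (use i1 in auto)
  with i1 have "1 \<le> (\<Sum>i<r. \<alpha> i)" by linarith
  then have "k * 1 \<le> k * (\<Sum>i<r. \<alpha> i)" by (rule mult_le_mono2)
  with assms(5) have "k \<le> n" by linarith
  have "a * of_nat (\<alpha> i) = 0" if "i < r" for i
  proof -
    have "0 = linear_form (alt_weight r n (\<lambda>i. k * \<alpha> i) i)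
        (Poly_Mapping.map (\<lambda>c. a * c) (gamma_prod r n k \<alpha>))"
      by (rule Gamma_less_linear_form_alt_weight[OF D bound assms(6), symmetric])
    also have "\<dots> = a * ((- 1) ^ Suc k * of_nat (\<alpha> i))"
      by (simp only: linear_form_scale
          linear_form_alt_weight_gamma_prod[OF assms(2) \<open>k \<le> n\<close> assms(3) that])
    finally have "(- 1) ^ Suc k * (a * ((- 1) ^ Suc k * of_nat (\<alpha> i))) = 0" by simp
    then show ?thesis by (simp add: mult.left_commute[of a])
  qed
  then have "a * of_nat (Gcd (\<alpha> ` {..<r})) = 0" by (intro mult_of_nat_Gcd_eq_0) auto
  moreover obtain u :: 'a where "1 = of_nat (Gcd (\<alpha> ` {..<r})) * u"
    using assms(4) by (blast elim: dvdE)
  then have "a = a * of_nat (Gcd (\<alpha> ` {..<r})) * u" by (simp add: mult.assoc)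
  ultimately show "a = 0" by simp
qed

end
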